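(* Let $E$ be a finite set of events with timestamps $\tau(e)\in\mathbb{R}$, let $t_w>0$ be real and $n\ge1$ an integer, and let $\mathcal{I}$ be the family of all $T\subseteq E$ with $|\{e\in T:\tau(e)\in[t,t+t_w)\}|\le n$ for every $t\in\mathbb{R}$. Let $Y\subseteq E$ and let $J_{\min}$, $J_{\max}$ be bases of $Y$ of minimum and maximum cardinality, respectively. For $e\in E$ let $\mathrm{ball}(e)=(\tau(e)-t_w,\tau(e)+t_w)$. Define the DeletionStep, taking a pair $(J_{\min},J_{\max})$ with $J_{\min}\neq\emptyset$ to a pair $(J'_{\min},J'_{\max})$: let $b$ be an element of $J_{\min}$ with minimum timestamp and set $J'_{\min}=J_{\min}\setminus\{b\}$; list the elements of $\{a\in J_{\max}:\tau(a)\in\mathrm{ball}(b)\}$ in increasing order of timestamp and let $J'_{\max}$ be $J_{\max}$ with the first two of these removed (or with all of them removed if there are fewer than two). Then the invariant "for every $a\in J_{\max}$ there exists $c\in J_{\min}$ with $\tau(c)\in\mathrm{ball}(a)$" holds for the initial pair $(J_{\min},J_{\max})$, and it also holds (with $J_{\min},J_{\max}$ replaced by the current sets) for the pair obtained after any number of successive iterations of DeletionStep starting from $(J_{\min},J_{\max})$.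
   Context: A base of $Y$ is an inclusion-maximal subset $J\subseteq Y$ with $J\in\mathcal{I}$. *)

theory Defs
  imports Complex_Main
begin

definition indep :: "'a set \<Rightarrow> ('a \<Rightarrow> real) \<Rightarrow> real \<Rightarrow> nat \<Rightarrow> 'a set \<Rightarrow> bool" where
  "indep E \<tau> tw n T \<longleftrightarrow> T \<subseteq> E \<and> (\<forall>t::real. card {e \<in> T. \<tau> e \<in> {t..<t + tw}} \<le> n)"

definition is_base :: "'a set \<Rightarrow> ('a \<Rightarrow> real) \<Rightarrow> real \<Rightarrow> nat \<Rightarrow> 'a set \<Rightarrow> 'a set \<Rightarrow> bool" where
  "is_base E \<tau> tw n Y J \<longleftrightarrow> J \<subseteq> Y \<and> indep E \<tau> tw n J \<and>
     (\<forall>J'. J \<subseteq> J' \<and> J' \<subseteq> Y \<and> indep E \<tau> tw n J' \<longrightarrow> J' = J)"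

definition ball_ev :: "('a \<Rightarrow> real) \<Rightarrow> real \<Rightarrow> 'a \<Rightarrow> real set" where
  "ball_ev \<tau> tw e = {\<tau> e - tw <..< \<tau> e + tw}"

(* One DeletionStep (as a relation, since ties in timestamps may be broken arbitrarily):
   b is an element of Jmin of minimum timestamp, Jmin' = Jmin - {b};
   A = elements of Jmax with timestamp in ball(b); R = first min(2,|A|) of A in
   increasing timestamp order; Jmax' = Jmax - R. *)
definition deletion_step :: "('a \<Rightarrow> real) \<Rightarrow> real \<Rightarrow> ('a set \<times> 'a set) \<Rightarrow> ('a set \<times> 'a set) \<Rightarrow> bool" where
  "deletion_step \<tau> tw p q \<longleftrightarrow>
     (let Jmin = fst p; Jmax = snd p in
      Jmin \<noteq> {} \<and>
      (\<exists>b \<in> Jmin. (\<forall>c \<in> Jmin. \<tau> b \<le> \<tau> c) \<and>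
        (let A = {a \<in> Jmax. \<tau> a \<in> ball_ev \<tau> tw b} in
         \<exists>R \<subseteq> A. card R = min 2 (card A) \<and>
           (\<forall>x \<in> R. \<forall>y \<in> A - R. \<tau> x \<le> \<tau> y) \<and>
           q = (Jmin - {b}, Jmax - R))))"

definition ball_invariant :: "('a \<Rightarrow> real) \<Rightarrow> real \<Rightarrow> 'a set \<Rightarrow> 'a set \<Rightarrow> bool" where
  "ball_invariant \<tau> tw Jmin Jmax \<longleftrightarrow> (\<forall>a \<in> Jmax. \<exists>c \<in> Jmin. \<tau> c \<in> ball_ev \<tau> tw a)"

end

theory Submission
  imports Defs
begin

text \<open>
  The ball invariant follows from a counting invariant, \<open>window_dominated\<close>: every closed
  interval [s, u] contains at most twice as many elements of the current J_max as the open
  interval (s - t_w, u + t_w) contains elements of the current J_min.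
  For two bases J, J' it holds by an exchange argument: the earliest element of J' in [s, u]
  outside J is blocked by a window [t, t + t_w) holding n elements of J, J' has at most 2n
  elements in [t, t + 2 t_w), everything of J' before t lies in J, and the part after
  t + 2 t_w is handled recursively.
  A DeletionStep preserves it. Removing the earliest element b of J_min lowers the right-hand
  side by one only for intervals reaching b. If such an interval keeps an element of J_max near
  b, two earlier elements near b were removed as well; otherwise every element of J_max it keeps
  lies at least t_w after b, so the interval can be shrunk to start there, excluding b.
\<close>

definition events_in :: "('a \<Rightarrow> real) \<Rightarrow> 'a set \<Rightarrow> real set \<Rightarrow> 'a set" where
  "events_in \<tau> S I = {a \<in> S. \<tau> a \<in> I}"

lemma finite_events_in [simp]: "finite S \<Longrightarrow> finite (events_in \<tau> S I)"
  by (simp add: events_in_def)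

lemma card_events_in_mono:
  "finite S' \<Longrightarrow> S \<subseteq> S' \<Longrightarrow> I \<subseteq> I' \<Longrightarrow> card (events_in \<tau> S I) \<le> card (events_in \<tau> S' I')"
  by (rule card_mono) (auto simp: events_in_def)

lemma events_in_Un: "events_in \<tau> S (I \<union> I') = events_in \<tau> S I \<union> events_in \<tau> S I'"
  by (auto simp: events_in_def)

lemma card_events_in_Un_disjoint:
  assumes "finite S" and "I \<inter> I' = {}"
  shows "card (events_in \<tau> S (I \<union> I')) = card (events_in \<tau> S I) + card (events_in \<tau> S I')"
  unfolding events_in_Un using assms by (intro card_Un_disjoint) (auto simp: events_in_def)

lemma card_events_in_three_windows:
  assumes "finite S" and "tw > 0" and "s - tw < t" and "t \<le> u"
  shows "card (events_in \<tau> S {s..<t}) + card (events_in \<tau> S {t..<t + tw})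
      + card (events_in \<tau> S {t + tw<..<u + tw}) \<le> card (events_in \<tau> S {s - tw<..<u + tw})"
proof -
  have "{s..<t} \<inter> {t..<t + tw} = {}" "({s..<t} \<union> {t..<t + tw}) \<inter> {t + tw<..<u + tw} = {}"
    using \<open>tw > 0\<close> by auto
  then have "card (events_in \<tau> S {s..<t}) + card (events_in \<tau> S {t..<t + tw})
      + card (events_in \<tau> S {t + tw<..<u + tw})
      = card (events_in \<tau> S ({s..<t} \<union> {t..<t + tw} \<union> {t + tw<..<u + tw}))"
    using \<open>finite S\<close> by (simp add: card_events_in_Un_disjoint)
  also have "\<dots> \<le> card (events_in \<tau> S {s - tw<..<u + tw})"
    using assms by (intro card_events_in_mono) auto
  finally show ?thesis .
qed

lemma card_events_in_split:
  assumes "finite I" and "finite J" and "events_in \<tau> I {s..<t} \<subseteq> J"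
  shows "card (events_in \<tau> I {s..u})
    \<le> card (events_in \<tau> J {s..<t}) + card (events_in \<tau> I {t..<t'}) + card (events_in \<tau> I {t'..u})"
proof -
  have "events_in \<tau> I {s..u} \<subseteq> events_in \<tau> J {s..<t} \<union> events_in \<tau> I {t..<t'} \<union> events_in \<tau> I {t'..u}"
    using assms(3) by (auto simp: events_in_def)
  then have "card (events_in \<tau> I {s..u})
      \<le> card (events_in \<tau> J {s..<t} \<union> events_in \<tau> I {t..<t'} \<union> events_in \<tau> I {t'..u})"
    using assms(1,2) by (intro card_mono) simp_all
  also have "\<dots> \<le> card (events_in \<tau> J {s..<t}) + card (events_in \<tau> I {t..<t'}) + card (events_in \<tau> I {t'..u})"
    by (meson add_right_mono card_Un_le order_trans)
  finally show ?thesis .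
qed

lemma indep_card_window: "indep E \<tau> tw n T \<Longrightarrow> card (events_in \<tau> T {t..<t + tw}) \<le> n"
  by (simp add: indep_def events_in_def)

lemma indep_card_double_window:
  assumes "indep E \<tau> tw n T"
  shows "card (events_in \<tau> T {t..<t + 2 * tw}) \<le> 2 * n"
proof -
  have "{t..<t + 2 * tw} = {t..<t + tw} \<union> {t + tw..<(t + tw) + tw}"
    by auto
  then have "card (events_in \<tau> T {t..<t + 2 * tw})
      \<le> card (events_in \<tau> T {t..<t + tw}) + card (events_in \<tau> T {t + tw..<(t + tw) + tw})"
    by (simp add: events_in_Un card_Un_le)
  also have "\<dots> \<le> 2 * n"
    using indep_card_window[OF assms, of t] indep_card_window[OF assms, of "t + tw"] by simp
  finally show ?thesis .
qed

lemma base_blocking_window: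
  assumes "finite E" and "Y \<subseteq> E" and base: "is_base E \<tau> tw n Y J"
    and "x \<in> Y" and "x \<notin> J"
  obtains t where "\<tau> x \<in> {t..<t + tw}" and "n \<le> card (events_in \<tau> J {t..<t + tw})"
proof -
  have J: "indep E \<tau> tw n J" "J \<subseteq> Y"
    and J_maximal: "\<And>J'. J \<subseteq> J' \<Longrightarrow> J' \<subseteq> Y \<Longrightarrow> indep E \<tau> tw n J' \<Longrightarrow> J' = J"
    using base by (auto simp: is_base_def)
  have "finite J"
    using assms(1,2) J(2) by (meson finite_subset order_trans)
  have "\<not> indep E \<tau> tw n (insert x J)"
    using J_maximal[of "insert x J"] \<open>x \<in> Y\<close> \<open>x \<notin> J\<close> J(2) by auto
  moreover have "insert x J \<subseteq> E"
    using assms(2,4) J(2) by auto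
  ultimately have "\<not> (\<forall>t. card (events_in \<tau> (insert x J) {t..<t + tw}) \<le> n)"
    unfolding indep_def events_in_def by blast
  then obtain t where t: "n < card (events_in \<tau> (insert x J) {t..<t + tw})"
    by (auto simp: not_le)
  have x_in: "\<tau> x \<in> {t..<t + tw}"
  proof (rule ccontr)
    assume "\<tau> x \<notin> {t..<t + tw}"
    then have "events_in \<tau> (insert x J) {t..<t + tw} = events_in \<tau> J {t..<t + tw}"
      by (auto simp: events_in_def)
    with t indep_card_window[OF J(1), of t] show False
      by simp
  qed
  then have "events_in \<tau> (insert x J) {t..<t + tw} = insert x (events_in \<tau> J {t..<t + tw})"
    by (auto simp: events_in_def)
  with t \<open>finite J\<close> \<open>x \<notin> J\<close> have "n \<le> card (events_in \<tau> J {t..<t + tw})"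
    by (simp add: events_in_def)
  with x_in show thesis
    using that by blast
qed

lemma base_dominates_indep:
  assumes "finite E" and "tw > 0" and "Y \<subseteq> E" and base: "is_base E \<tau> tw n Y J"
    and I: "indep E \<tau> tw n I" "I \<subseteq> Y"
  shows "card (events_in \<tau> I {s..u}) \<le> 2 * card (events_in \<tau> J {s - tw<..<u + tw})"
proof (induction "card (events_in \<tau> I {s..u})" arbitrary: s rule: less_induct)
  case less
  have "finite I" "finite J"
    using assms(1,3) I(2) base unfolding is_base_def by (meson finite_subset order_trans)+
  define X where "X = events_in \<tau> I {s..u}"
  show ?case
  proof (cases "X \<subseteq> J")
    case True
    then have "X \<subseteq> events_in \<tau> J {s - tw<..<u + tw}"
      using \<open>tw > 0\<close> by (auto simp: X_def events_in_def)
    then have "card X \<le> card (events_in \<tau> J {s - tw<..<u + tw})"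
      using \<open>finite J\<close> by (intro card_mono) simp_all
    then show ?thesis
      by (simp add: X_def)
  next
    case False
    obtain x where x: "x \<in> X - J" and x_least: "\<And>y. y \<in> X - J \<Longrightarrow> \<tau> x \<le> \<tau> y"
      using ex_is_arg_min_if_finite[of "X - J" \<tau>] False \<open>finite I\<close>
      by (auto simp: X_def is_arg_min_linorder)
    have "x \<in> Y" "s \<le> \<tau> x" "\<tau> x \<le> u"
      using x I(2) by (auto simp: X_def events_in_def)
    obtain t where t: "\<tau> x \<in> {t..<t + tw}" and J_full: "n \<le> card (events_in \<tau> J {t..<t + tw})"
      using base_blocking_window[OF assms(1,3) base \<open>x \<in> Y\<close>] x by blast
    define X\<^sub>3 where "X\<^sub>3 = events_in \<tau> I {t + 2 * tw..u}"
    have "events_in \<tau> I {s..<t} \<subseteq> J"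
    proof
      fix a assume a: "a \<in> events_in \<tau> I {s..<t}"
      with t \<open>\<tau> x \<le> u\<close> have "a \<in> X"
        by (auto simp: X_def events_in_def)
      with x_least[of a] t a show "a \<in> J"
        by (force simp: events_in_def)
    qed
    then have "card X \<le> card (events_in \<tau> J {s..<t}) + card (events_in \<tau> I {t..<t + 2 * tw}) + card X\<^sub>3"
      unfolding X_def X\<^sub>3_def by (rule card_events_in_split[OF \<open>finite I\<close> \<open>finite J\<close>])
    moreover have "card X\<^sub>3 \<le> 2 * card (events_in \<tau> J {t + tw<..<u + tw})"
    proof -
      have "X\<^sub>3 \<subseteq> X" and "x \<in> X - X\<^sub>3"
        using x t \<open>s \<le> \<tau> x\<close> \<open>tw > 0\<close> by (auto simp: X_def X\<^sub>3_def events_in_def)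
      then have "X\<^sub>3 \<subset> X"
        by blast
      then have "card X\<^sub>3 < card X"
        using \<open>finite I\<close> by (simp add: X_def psubset_card_mono)
      then show ?thesis
        using less[of "t + 2 * tw"] by (simp add: X_def X\<^sub>3_def add.commute)
    qed
    moreover have "card (events_in \<tau> I {t..<t + 2 * tw}) \<le> 2 * card (events_in \<tau> J {t..<t + tw})"
      using indep_card_double_window[OF I(1), of t] J_full by simp
    moreover have "s - tw < t" "t \<le> u"
      using t \<open>s \<le> \<tau> x\<close> \<open>\<tau> x \<le> u\<close> by auto
    ultimately show ?thesis
      using card_events_in_three_windows[OF \<open>finite J\<close> \<open>tw > 0\<close>, of s t u \<tau>]
      unfolding X_def by linarith
  qed
qed

definition window_dominated :: "('a \<Rightarrow> real) \<Rightarrow> real \<Rightarrow> 'a set \<Rightarrow> 'a set \<Rightarrow> bool" where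
  "window_dominated \<tau> tw P Q \<longleftrightarrow> finite P \<and> finite Q \<and>
     (\<forall>s u. card (events_in \<tau> Q {s..u}) \<le> 2 * card (events_in \<tau> P {s - tw<..<u + tw}))"

lemma window_dominatedD:
  "window_dominated \<tau> tw P Q \<Longrightarrow> card (events_in \<tau> Q {s..u}) \<le> 2 * card (events_in \<tau> P {s - tw<..<u + tw})"
  by (simp add: window_dominated_def)

lemma base_window_dominated:
  assumes "finite E" and "tw > 0" and "Y \<subseteq> E"
    and "is_base E \<tau> tw n Y J" and "is_base E \<tau> tw n Y J'"
  shows "window_dominated \<tau> tw J J'"
proof -
  have "indep E \<tau> tw n J'" "J \<subseteq> Y" "J' \<subseteq> Y"
    using assms(4,5) by (auto simp: is_base_def)
  then show ?thesis
    using base_dominates_indep[OF assms(1-4)] assms(1,3)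
    unfolding window_dominated_def by (meson finite_subset order_trans)
qed

lemma window_dominated_ball_invariant:
  assumes "window_dominated \<tau> tw P Q"
  shows "ball_invariant \<tau> tw P Q"
  unfolding ball_invariant_def
proof
  fix a assume "a \<in> Q"
  have "finite Q" "finite P"
    and "card (events_in \<tau> Q {\<tau> a..\<tau> a}) \<le> 2 * card (events_in \<tau> P {\<tau> a - tw<..<\<tau> a + tw})"
    using assms unfolding window_dominated_def by blast+
  moreover have "0 < card (events_in \<tau> Q {\<tau> a..\<tau> a})"
    using \<open>a \<in> Q\<close> \<open>finite Q\<close> by (auto simp: card_gt_0_iff events_in_def)
  ultimately have "events_in \<tau> P {\<tau> a - tw<..<\<tau> a + tw} \<noteq> {}"
    by auto
  then show "\<exists>c\<in>P. \<tau> c \<in> ball_ev \<tau> tw a"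
    by (auto simp: events_in_def ball_ev_def)
qed

lemma ball_invariant_lower_bound:
  assumes "ball_invariant \<tau> tw P Q" and "\<forall>c\<in>P. \<tau> b \<le> \<tau> c" and "y \<in> Q"
  shows "\<tau> b - tw < \<tau> y"
  using assms by (force simp: ball_invariant_def ball_ev_def)

lemma deletion_stepE:
  assumes "deletion_step \<tau> tw (P, Q) (P', Q')"
  obtains b R where "b \<in> P" and "\<forall>c\<in>P. \<tau> b \<le> \<tau> c"
    and "R \<subseteq> events_in \<tau> Q (ball_ev \<tau> tw b)"
    and "card R = min 2 (card (events_in \<tau> Q (ball_ev \<tau> tw b)))"
    and "\<forall>x\<in>R. \<forall>y\<in>events_in \<tau> Q (ball_ev \<tau> tw b) - R. \<tau> x \<le> \<tau> y"
    and "P' = P - {b}" and "Q' = Q - R"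
  using assms unfolding deletion_step_def events_in_def Let_def by auto

lemma least_two_before_remaining:
  assumes "finite A" and "R \<subseteq> A" and "card R = min 2 (card A)"
    and "\<forall>x\<in>R. \<forall>y\<in>A - R. \<tau> x \<le> \<tau> y" and "y \<in> A - R"
  shows "card R = 2" and "\<forall>r\<in>R. \<tau> r \<le> \<tau> y"
proof -
  have "card R < card A"
    using assms(1,2,5) by (intro psubset_card_mono) auto
  then show "card R = 2"
    using assms(3) by simp
  show "\<forall>r\<in>R. \<tau> r \<le> \<tau> y"
    using assms(4,5) by blast
qed

lemma window_dominated_remove_early_pair:
  assumes dom: "window_dominated \<tau> tw P Q" and b: "\<forall>c\<in>P. \<tau> b \<le> \<tau> c" "s - tw < \<tau> b"
    and R: "R \<subseteq> Q" "card R = 2" "\<forall>r\<in>R. \<tau> b - tw < \<tau> r \<and> \<tau> r \<le> u"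
  shows "card (events_in \<tau> (Q - R) {s..u}) + 2 \<le> 2 * card (events_in \<tau> P {s - tw<..<u + tw})"
proof -
  define s' where "s' = min s (\<tau> b - tw)"
  have "finite Q"
    using dom by (simp add: window_dominated_def)
  have "card (events_in \<tau> (Q - R) {s..u}) + 2 = card (events_in \<tau> (Q - R) {s..u} \<union> R)"
    using finite_subset[OF R(1) \<open>finite Q\<close>] \<open>finite Q\<close> R(2)
    by (subst card_Un_disjoint) (auto simp: events_in_def)
  also have "\<dots> \<le> card (events_in \<tau> Q {s'..u})"
    using \<open>finite Q\<close> R by (intro card_mono) (auto simp: s'_def events_in_def)
  also have "\<dots> \<le> 2 * card (events_in \<tau> P {s' - tw<..<u + tw})"
    by (rule window_dominatedD[OF dom])
  also have "events_in \<tau> P {s' - tw<..<u + tw} = events_in \<tau> P {s - tw<..<u + tw}"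
    using b by (force simp: s'_def events_in_def)
  finally show ?thesis .
qed

lemma window_dominated_remove_far:
  assumes dom: "window_dominated \<tau> tw P Q" and b: "\<forall>c\<in>P. \<tau> b \<le> \<tau> c"
    and "Q' \<subseteq> Q" and far: "\<forall>y\<in>events_in \<tau> Q' {s..u}. \<tau> y \<notin> ball_ev \<tau> tw b"
  shows "card (events_in \<tau> Q' {s..u}) \<le> 2 * card (events_in \<tau> (P - {b}) {s - tw<..<u + tw})"
proof -
  define s' where "s' = max s (\<tau> b + tw)"
  have "finite P" "finite Q"
    using dom by (simp_all add: window_dominated_def)
  have "events_in \<tau> Q' {s..u} \<subseteq> events_in \<tau> Q {s'..u}"
  proof
    fix y assume y: "y \<in> events_in \<tau> Q' {s..u}"
    then have "y \<in> Q"
      using \<open>Q' \<subseteq> Q\<close> by (auto simp: events_in_def)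
    then have "\<tau> b - tw < \<tau> y"
      using ball_invariant_lower_bound[OF window_dominated_ball_invariant[OF dom] b] by blast
    with far y show "y \<in> events_in \<tau> Q {s'..u}"
      using \<open>y \<in> Q\<close> by (auto simp: s'_def events_in_def ball_ev_def)
  qed
  then have "card (events_in \<tau> Q' {s..u}) \<le> card (events_in \<tau> Q {s'..u})"
    using \<open>finite Q\<close> by (intro card_mono) simp_all
  also have "\<dots> \<le> 2 * card (events_in \<tau> P {s' - tw<..<u + tw})"
    by (rule window_dominatedD[OF dom])
  also have "\<dots> \<le> 2 * card (events_in \<tau> (P - {b}) {s - tw<..<u + tw})"
    using \<open>finite P\<close> by (intro mult_le_mono2 card_mono) (auto simp: s'_def events_in_def)
  finally show ?thesis .
qed

lemma window_dominated_deletion_step: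
  assumes dom: "window_dominated \<tau> tw P Q" and step: "deletion_step \<tau> tw (P, Q) (P', Q')"
  shows "window_dominated \<tau> tw P' Q'"
proof -
  obtain b R where b: "b \<in> P" "\<forall>c\<in>P. \<tau> b \<le> \<tau> c"
    and R: "R \<subseteq> events_in \<tau> Q (ball_ev \<tau> tw b)"
      "card R = min 2 (card (events_in \<tau> Q (ball_ev \<tau> tw b)))"
      "\<forall>x\<in>R. \<forall>y\<in>events_in \<tau> Q (ball_ev \<tau> tw b) - R. \<tau> x \<le> \<tau> y"
    and P': "P' = P - {b}" and Q': "Q' = Q - R"
    using step by (rule deletion_stepE)
  define A where "A = events_in \<tau> Q (ball_ev \<tau> tw b)"
  have "finite P" "finite Q"
    using dom by (simp_all add: window_dominated_def)
  have "card (events_in \<tau> Q' {s..u}) \<le> 2 * card (events_in \<tau> P' {s - tw<..<u + tw})" for s u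
  proof (cases "\<tau> b \<in> {s - tw<..<u + tw}")
    case False
    then have "events_in \<tau> P' {s - tw<..<u + tw} = events_in \<tau> P {s - tw<..<u + tw}"
      by (auto simp: P' events_in_def)
    moreover have "card (events_in \<tau> Q' {s..u}) \<le> card (events_in \<tau> Q {s..u})"
      using \<open>finite Q\<close> by (intro card_events_in_mono) (auto simp: Q')
    ultimately show ?thesis
      using window_dominatedD[OF dom, of s u] by simp
  next
    case True
    have P_window: "events_in \<tau> P {s - tw<..<u + tw} = insert b (events_in \<tau> P' {s - tw<..<u + tw})"
      using True b(1) by (auto simp: P' events_in_def)
    from True have "s - tw < \<tau> b"
      by simp
    have card_P: "card (events_in \<tau> P {s - tw<..<u + tw}) = card (events_in \<tau> P' {s - tw<..<u + tw}) + 1"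
      using P_window \<open>finite P\<close> by (simp add: P' events_in_def)
    show ?thesis
    proof (cases "\<exists>y\<in>events_in \<tau> Q' {s..u}. y \<in> A")
      case True
      then obtain y where y: "y \<in> events_in \<tau> Q' {s..u}" "y \<in> A - R"
        by (auto simp: Q' events_in_def)
      have "finite A"
        using \<open>finite Q\<close> by (simp add: A_def)
      note R_before_y = least_two_before_remaining[OF this R(1,2,3)[folded A_def] y(2)]
      have R_near: "\<forall>r\<in>R. \<tau> b - tw < \<tau> r \<and> \<tau> r \<le> u"
        using R(1) R_before_y(2) y(1) by (fastforce simp: events_in_def ball_ev_def)
      have "R \<subseteq> Q"
        using R(1) by (auto simp: events_in_def)
      show ?thesis
        using window_dominated_remove_early_pair[OF dom b(2) \<open>s - tw < \<tau> b\<close> \<open>R \<subseteq> Q\<close> R_before_y(1) R_near]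
          card_P
        by (simp add: Q')
    next
      case False
      then show ?thesis
        using window_dominated_remove_far[OF dom b(2), of Q' s u]
        by (auto simp: P' Q' A_def events_in_def)
    qed
  qed
  moreover have "finite P'" "finite Q'"
    using \<open>finite P\<close> \<open>finite Q\<close> by (simp_all add: P' Q')
  ultimately show ?thesis
    by (simp add: window_dominated_def)
qed

theorem lemma3:
  fixes E :: "'a set" and \<tau> :: "'a \<Rightarrow> real" and tw :: real and n :: nat
    and Y Jmin Jmax :: "'a set"
  assumes "finite E" and "tw > 0" and "n \<ge> 1" and "Y \<subseteq> E"
    and "is_base E \<tau> tw n Y Jmin" and "\<forall>J. is_base E \<tau> tw n Y J \<longrightarrow> card Jmin \<le> card J"
    and "is_base E \<tau> tw n Y Jmax" and "\<forall>J. is_base E \<tau> tw n Y J \<longrightarrow> card J \<le> card Jmax"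
  shows "ball_invariant \<tau> tw Jmin Jmax \<and>
         (\<forall>P Q. (deletion_step \<tau> tw)\<^sup>*\<^sup>* (Jmin, Jmax) (P, Q) \<longrightarrow> ball_invariant \<tau> tw P Q)"
proof -
  have "window_dominated \<tau> tw P Q" if "(deletion_step \<tau> tw)\<^sup>*\<^sup>* (Jmin, Jmax) (P, Q)" for P Q
    using that
  proof (induction "(P, Q)" arbitrary: P Q rule: rtranclp_induct)
    case base
    show ?case
      using base_window_dominated[OF assms(1,2,4,5,7)] by simp
  next
    case (step PQ)
    then show ?case
      using window_dominated_deletion_step[of \<tau> tw "fst PQ" "snd PQ"] by simp
  qed
  then show ?thesis
    using window_dominated_ball_invariant by blast
qed

end
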